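(* Let $p,q\in\mathbb{N}$ be coprime, $k\in\mathbb{N}$ squarefree, $m=-pk$, $n=qk$, and let $P\in E(m,n)(\mathbb{Q})$ be a rational point which is neither the neutral element nor one of the three points of order $2$. Let $(X_0:X_1:X_2:X_3)=\psi(P)\in Q(m,n)(\mathbb{Q})$ (so $X_1\neq0$), put $\alpha=X_2/X_1$, $\beta=X_0/X_1$, $\gamma=X_3/X_1$, so that $\alpha^2=\beta^2-pk$ and $\gamma^2=\beta^2+qk$ (the associated triple of rational squares $\alpha^2\le\beta^2<\gamma^2$ in arithmetic progression of step $k$), and let $\Delta$ be the triangle with sides $a=|\gamma|+|\alpha|$, $b=|\gamma|-|\alpha|$, $c=2|\beta|$, whose angle $\theta$ between the sides $a$ and $b$ satisfies $\cos\theta=(q-p)/(q+p)$. Then the following are equivalent: (i) $P$ has order $4$; (ii) $\alpha^2=0$, i.e. the triple of squares contains $0$; (iii) $a=b$, i.e. $\Delta$ is isosceles with the angle $\theta$ between its two equal sides.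
   Context: $E(m,n)$ is the elliptic curve $y^2=x(x+m)(x+n)$ (projectively $Y^2T=X(X+mT)(X+nT)$ with coordinates $(T:X:Y)$), with neutral element the point at infinity and points of order 2 $(0,0),(-m,0),(-n,0)$. $Q(m,n)\subset\mathbb{P}^3$ is the curve $X_0^2+mX_1^2=X_2^2,\ X_0^2+nX_1^2=X_3^2$. $\psi:E(m,n)\to Q(m,n)$ is the isomorphism of curves extending the rational map $(T:X:Y)\mapsto\bigl(-(X+mT)(Y^2-m(X+nT)^2) : 2Y(X+nT)(X+mT) : -(X+mT)(Y^2+m(X+nT)^2) : -(X+nT)(Y^2+n(X+mT)^2)\bigr)$; it maps the neutral element and the three points of order 2 to the points $(1:0:\pm1:\pm1)$ and all other rational points to points with $X_1\neq0$. *)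

theory Defs
  imports "HOL-Computational_Algebra.Computational_Algebra"
begin

datatype ept = Inf | Aff rat rat

definition on_E :: "rat \<Rightarrow> rat \<Rightarrow> ept \<Rightarrow> bool" where
  "on_E m n P = (case P of Inf \<Rightarrow> True
     | Aff x y \<Rightarrow> y^2 = x * (x + m) * (x + n))"

definition ec_add :: "rat \<Rightarrow> rat \<Rightarrow> ept \<Rightarrow> ept \<Rightarrow> ept" where
  "ec_add m n P Q = (case P of Inf \<Rightarrow> Q | Aff x1 y1 \<Rightarrow>
     (case Q of Inf \<Rightarrow> P | Aff x2 y2 \<Rightarrow>
       (if x1 = x2 \<and> y1 = - y2 then Inf
        else let l = (if x1 = x2 then (3 * x1^2 + 2 * (m + n) * x1 + m * n) / (2 * y1)
                      else (y2 - y1) / (x2 - x1));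
                 x3 = l^2 - (m + n) - x1 - x2;
                 y3 = - (y1 + l * (x3 - x1))
             in Aff x3 y3)))"

fun ec_mult :: "rat \<Rightarrow> rat \<Rightarrow> nat \<Rightarrow> ept \<Rightarrow> ept" where
  "ec_mult m n 0 P = Inf"
| "ec_mult m n (Suc j) P = ec_add m n P (ec_mult m n j P)"

definition ec_has_order :: "rat \<Rightarrow> rat \<Rightarrow> ept \<Rightarrow> nat \<Rightarrow> bool" where
  "ec_has_order m n P d \<longleftrightarrow> 0 < d \<and> ec_mult m n d P = Inf
      \<and> (\<forall>j. 0 < j \<and> j < d \<longrightarrow> ec_mult m n j P \<noteq> Inf)"

text \<open>The map psi : E(m,n) -> Q(m,n), given at an affine point (T:X:Y) = (1:x:y)
  by the stated formula; result (X0, X1, X2, X3).\<close>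
definition psi :: "rat \<Rightarrow> rat \<Rightarrow> rat \<Rightarrow> rat \<Rightarrow> rat \<times> rat \<times> rat \<times> rat" where
  "psi m n x y =
     (- (x + m) * (y^2 - m * (x + n)^2),
      2 * y * (x + n) * (x + m),
      - (x + m) * (y^2 + m * (x + n)^2),
      - (x + n) * (y^2 + n * (x + m)^2))"

end

theory Submission
  imports Defs
begin

(* Write P = (x,y) with y <> 0, and D = x^2 + 2mx + mn.
   On the psi side, X1 <> 0 and X2 = -(x+m)(y^2 + m(x+n)^2), where
   y^2 + m(x+n)^2 = (x+n) D on the curve, so alpha^2 = 0 iff D = 0; the isosceles
   condition a = b is just |alpha| = 0.
   On the group side, the classical doubling identity
   4 y^2 (x(2P) + m) = D^2 shows that D = 0 says precisely that 2P is the
   two-torsion point (-m,0). *)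

lemma ec_mult_small:
  "ec_mult m n 1 P = P"
  "ec_mult m n 2 P = ec_add m n P P"
  "ec_mult m n 3 P = ec_add m n P (ec_mult m n 2 P)"
  "ec_mult m n 4 P = ec_add m n P (ec_mult m n 3 P)"
  by (cases P; simp add: numeral_eq_Suc ec_add_def)+

lemma ec_add_Aff_eq_Inf:
  "ec_add m n (Aff x y) Q = Inf \<longleftrightarrow> Q = Aff x (- y)"
  by (cases Q) (auto simp: ec_add_def Let_def)

lemma ec_add_same_x:
  assumes "y \<noteq> 0" and "y' \<noteq> - y"
  shows "ec_add m n (Aff x y) (Aff x y') = ec_add m n (Aff x y) (Aff x y)"
  using assms by (simp add: ec_add_def Let_def)

definition tangent_slope :: "rat \<Rightarrow> rat \<Rightarrow> rat \<Rightarrow> rat \<Rightarrow> rat" where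
  "tangent_slope m n x y = (3 * x^2 + 2 * (m + n) * x + m * n) / (2 * y)"

definition double_x :: "rat \<Rightarrow> rat \<Rightarrow> rat \<Rightarrow> rat \<Rightarrow> rat" where
  "double_x m n x y = (tangent_slope m n x y)^2 - (m + n) - 2 * x"

definition double_y :: "rat \<Rightarrow> rat \<Rightarrow> rat \<Rightarrow> rat \<Rightarrow> rat" where
  "double_y m n x y = - (y + tangent_slope m n x y * (double_x m n x y - x))"

lemma ec_double:
  assumes "y \<noteq> 0"
  shows "ec_add m n (Aff x y) (Aff x y) = Aff (double_x m n x y) (double_y m n x y)"
  using assms by (simp add: ec_add_def Let_def double_x_def double_y_def tangent_slope_def)

lemma doubling_identities:
  fixes m n x y :: rat
  assumes curve: "y^2 = x * (x + m) * (x + n)" and "y \<noteq> 0"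
  defines "x3 \<equiv> double_x m n x y" and "y3 \<equiv> double_y m n x y"
  shows "4 * y^2 * (x3 + m) = (x^2 + 2 * m * x + m * n)^2"
    and "4 * y^2 * x3 = (x^2 - m * n)^2"
    and "4 * y^2 * (x3 + n) = (x^2 + 2 * n * x + m * n)^2"
    and "y3^2 = x3 * (x3 + m) * (x3 + n)"
proof -
  define l where "l = tangent_slope m n x y"
  have slope: "2 * y * l = 3 * x^2 + 2 * (m + n) * x + m * n"
    using \<open>y \<noteq> 0\<close> by (simp add: l_def tangent_slope_def)
  have x3: "x3 = l^2 - (m + n) - 2 * x" and y3: "y3 = - (y + l * (x3 - x))"
    by (simp_all add: x3_def y3_def l_def double_x_def double_y_def)
  show "4 * y^2 * (x3 + m) = (x^2 + 2 * m * x + m * n)^2"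
    and "4 * y^2 * x3 = (x^2 - m * n)^2"
    and "4 * y^2 * (x3 + n) = (x^2 + 2 * n * x + m * n)^2"
    using curve slope unfolding x3 by algebra+
  have "x3 * (x3 + m) * (x3 + n) = (y + l * (x3 - x))^2"
    using curve slope x3 by algebra
  then show "y3^2 = x3 * (x3 + m) * (x3 + n)" by (simp only: y3 power2_minus)
qed

lemma add_to_halving_point:
  fixes m n x y :: rat
  assumes curve: "y^2 = x * (x + m) * (x + n)" and "x + m \<noteq> 0"
    and D: "x^2 + 2 * m * x + m * n = 0"
  shows "ec_add m n (Aff x y) (Aff (- m) 0) = Aff x (- y)"
proof -
  define l where "l = y / (- m - x)"
  have "(- m - x)^2 = (x + m)^2" by algebra
  moreover have "y^2 = (x + m)^2 * (2 * x + n)" using curve D by algebra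
  ultimately have "l^2 = 2 * x + n"
    using \<open>x + m \<noteq> 0\<close> by (simp add: l_def power_divide)
  moreover have "x \<noteq> - m" using \<open>x + m \<noteq> 0\<close> by (simp add: add_eq_0_iff)
  ultimately show ?thesis by (simp add: ec_add_def Let_def l_def[symmetric])
qed

lemma halving_point_has_order_4:
  fixes m n x y :: rat
  assumes curve: "y^2 = x * (x + m) * (x + n)" and "y \<noteq> 0"
    and D: "x^2 + 2 * m * x + m * n = 0"
  shows "ec_has_order m n (Aff x y) 4"
proof -
  note ids = doubling_identities[OF curve \<open>y \<noteq> 0\<close>]
  have "x + m \<noteq> 0" using curve \<open>y \<noteq> 0\<close> by auto
  have "double_x m n x y = - m" using ids(1) D \<open>y \<noteq> 0\<close> by simp
  moreover from this have "double_y m n x y = 0" using ids(4) by simp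
  ultimately have two: "ec_mult m n 2 (Aff x y) = Aff (- m) 0"
    using \<open>y \<noteq> 0\<close> by (simp add: ec_mult_small ec_double)
  have three: "ec_mult m n 3 (Aff x y) = Aff x (- y)"
    using add_to_halving_point[OF curve \<open>x + m \<noteq> 0\<close> D] by (simp add: ec_mult_small(3) two)
  have "ec_mult m n 4 (Aff x y) = Inf"
    by (simp add: ec_mult_small(4) three ec_add_Aff_eq_Inf)
  moreover have "ec_mult m n j (Aff x y) \<noteq> Inf" if "0 < j" "j < 4" for j
  proof -
    have "j = 1 \<or> j = 2 \<or> j = 3" using that by auto
    then show ?thesis using two three by (elim disjE) (simp_all add: ec_add_Aff_eq_Inf)
  qed
  ultimately show ?thesis unfolding ec_has_order_def by auto
qed

lemma triple_eq_neg_imp_double_2torsion: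
  fixes m n x y x3 y3 :: rat
  assumes "y \<noteq> 0"
    and double: "ec_add m n (Aff x y) (Aff x y) = Aff x3 y3"
    and triple: "ec_add m n (Aff x y) (Aff x3 y3) = Aff x (- y)"
  shows "y3 = 0"
proof -
  define l where "l = tangent_slope m n x y"
  have x3: "x3 = l^2 - (m + n) - 2 * x" and y3: "y3 = - (y + l * (x3 - x))"
    using double ec_double[OF \<open>y \<noteq> 0\<close>] by (auto simp: l_def double_x_def double_y_def)
  text \<open>2P cannot share the x-coordinate of P: the sum would then be O or 2P itself.\<close>
  have "x \<noteq> x3"
  proof
    assume "x = x3"
    show False
    proof (cases "y3 = - y")
      case True
      then show False using triple \<open>x = x3\<close> by (simp add: ec_add_def)
    next
      case False
      then have "Aff x3 y3 = Aff x (- y)"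
        using triple double ec_add_same_x[OF \<open>y \<noteq> 0\<close> False] \<open>x = x3\<close> by simp
      then show False using False by simp
    qed
  qed
  text \<open>So the sum uses the chord through P and 2P; it returns to the x-coordinate of P
    only if the chord and the tangent at P have equal squared slopes.\<close>
  define l' where "l' = (y3 - y) / (x3 - x)"
  have "l'^2 - (m + n) - x - x3 = x"
    using \<open>x \<noteq> x3\<close> triple by (simp add: ec_add_def Let_def l'_def)
  then have "l'^2 = l^2" using x3 by simp
  then have "(l' * (x3 - x))^2 = (l * (x3 - x))^2" by (simp add: power_mult_distrib)
  moreover have "l' * (x3 - x) = y3 - y" using \<open>x \<noteq> x3\<close> unfolding l'_def by simp
  moreover have "l * (x3 - x) = - (y3 + y)" using y3 by simp
  ultimately have "(y3 - y)^2 = (y3 + y)^2" by (metis power2_minus)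
  then have "4 * y * y3 = 0" by (simp add: power2_eq_square algebra_simps)
  then show ?thesis using \<open>y \<noteq> 0\<close> by simp
qed

text \<open>If 4P = O then 3P = -P, so 2P is a two-torsion point.\<close>
lemma order_4_imp_double_2torsion:
  assumes "y \<noteq> 0" and "ec_has_order m n (Aff x y) 4"
  shows "double_y m n x y = 0"
proof -
  note double = ec_double[OF \<open>y \<noteq> 0\<close>]
  have "ec_mult m n 4 (Aff x y) = Inf" using assms(2) by (simp add: ec_has_order_def)
  then have "ec_mult m n 3 (Aff x y) = Aff x (- y)"
    by (simp add: ec_mult_small(4) ec_add_Aff_eq_Inf)
  then have "ec_add m n (Aff x y) (Aff (double_x m n x y) (double_y m n x y)) = Aff x (- y)"
    by (simp add: ec_mult_small(2,3) double)
  then show ?thesis using triple_eq_neg_imp_double_2torsion[OF \<open>y \<noteq> 0\<close> double] by blast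
qed

text \<open>For m < 0 < n the only two-torsion point that can be a double is (-m,0),
  and 2P = (-m,0) means D = 0.\<close>
lemma double_2torsion_imp_halving_point:
  fixes m n x y :: rat
  assumes "m < 0" "0 < n" and curve: "y^2 = x * (x + m) * (x + n)" and "y \<noteq> 0"
    and y3: "double_y m n x y = 0"
  shows "x^2 + 2 * m * x + m * n = 0"
proof -
  note ids = doubling_identities[OF curve \<open>y \<noteq> 0\<close>]
  define x3 where "x3 = double_x m n x y"
  have y2: "y^2 > 0" using \<open>y \<noteq> 0\<close> by simp
  have "x3 * (x3 + m) * (x3 + n) = 0" using ids(4) y3 by (simp add: x3_def)
  moreover have "x3 \<noteq> 0"
  proof
    assume "x3 = 0"
    then have "x^2 = m * n" using ids(2) \<open>y \<noteq> 0\<close> by (simp add: x3_def)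
    moreover have "m * n < 0" using \<open>m < 0\<close> \<open>0 < n\<close> by (simp add: mult_neg_pos)
    ultimately show False by (metis not_less zero_le_power2)
  qed
  moreover have "x3 + n \<noteq> 0"
  proof
    assume "x3 + n = 0"
    then have "x^2 + 2 * n * x + m * n = 0" using ids(3) \<open>y \<noteq> 0\<close> by (simp add: x3_def)
    then have "y^2 = - n * (x + m)^2" using curve by algebra
    moreover have "n * (x + m)^2 \<ge> 0" using \<open>0 < n\<close> by simp
    ultimately show False using y2 by linarith
  qed
  ultimately have "x3 + m = 0" by simp
  then show ?thesis using ids(1) \<open>y \<noteq> 0\<close> by (simp add: x3_def)
qed

text \<open>alpha = X2/X1 vanishes exactly when D does, because
  y^2 + m(x+n)^2 = (x+n) D on the curve.\<close>
lemma psi_alpha_eq_0_iff: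
  fixes m n x y :: rat
  assumes curve: "y^2 = x * (x + m) * (x + n)" and "y \<noteq> 0"
    and psi: "psi m n x y = (X0, X1, X2, X3)"
  shows "(X2 / X1)^2 = 0 \<longleftrightarrow> x^2 + 2 * m * x + m * n = 0"
proof -
  have "x + m \<noteq> 0" "x + n \<noteq> 0" using curve \<open>y \<noteq> 0\<close> by auto
  have X1: "X1 = 2 * y * (x + n) * (x + m)" and X2: "X2 = - (x + m) * (y^2 + m * (x + n)^2)"
    using psi by (auto simp: psi_def)
  have "y^2 + m * (x + n)^2 = (x + n) * (x^2 + 2 * m * x + m * n)"
    using curve by algebra
  then show ?thesis
    using X1 X2 \<open>y \<noteq> 0\<close> \<open>x + m \<noteq> 0\<close> \<open>x + n \<noteq> 0\<close> by simp
qed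

theorem theorem4p6:
  fixes p q k :: nat and x y :: rat
  assumes "0 < p" and "0 < q"
    and "coprime p q" and "squarefree k"
    and "m = - of_nat (p * k)" and "n = of_nat (q * k)"
    and "on_E m n (Aff x y)"
    and "y \<noteq> 0"
    and "psi m n x y = (X0, X1, X2, X3)"
    and "\<alpha> = X2 / X1" and "\<beta> = X0 / X1" and "\<gamma> = X3 / X1"
    and "a = \<bar>\<gamma>\<bar> + \<bar>\<alpha>\<bar>" and "b = \<bar>\<gamma>\<bar> - \<bar>\<alpha>\<bar>"
  shows "(ec_has_order m n (Aff x y) 4 \<longleftrightarrow> \<alpha>^2 = 0) \<and> (\<alpha>^2 = 0 \<longleftrightarrow> a = b)"
proof -
  have "0 < k" using \<open>squarefree k\<close> by (cases k) auto
  then have "m < 0" "0 < n" using assms(1,2,5,6) by simp_all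
  have curve: "y^2 = x * (x + m) * (x + n)" using assms(7) by (simp add: on_E_def)
  have "ec_has_order m n (Aff x y) 4 \<longleftrightarrow> x^2 + 2 * m * x + m * n = 0"
    using halving_point_has_order_4[OF curve \<open>y \<noteq> 0\<close>]
      double_2torsion_imp_halving_point[OF \<open>m < 0\<close> \<open>0 < n\<close> curve \<open>y \<noteq> 0\<close>]
      order_4_imp_double_2torsion[OF \<open>y \<noteq> 0\<close>] by blast
  moreover have "\<alpha>^2 = 0 \<longleftrightarrow> x^2 + 2 * m * x + m * n = 0"
    using psi_alpha_eq_0_iff[OF curve \<open>y \<noteq> 0\<close> assms(9)] assms(10) by simp
  moreover have "\<alpha>^2 = 0 \<longleftrightarrow> a = b" using assms(13,14) by auto
  ultimately show ?thesis by simp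
qed

end
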